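(* Let $v=(x,y,z)^T\in\mathbb{O}^3$ with associator $[v]:=[x,y,z]\neq 0$. Suppose $A=\begin{pmatrix} p & a & \bar c\\ \bar a & m & b\\ c & \bar b & n\end{pmatrix}$ with $p,m,n\in\mathbb{R}$, $a,b,c\in\mathbb{O}$ satisfies $Av = v[v]$, i.e. $$px+ay+\bar c z = x[v],\qquad \bar a x + m y + b z = y[v],\qquad c x+\bar b y + n z = z[v].$$ Then $b$ is orthogonal to $[v]$, i.e. $\operatorname{Re}(b\,\overline{[v]})=0$. (Equivalently, after choosing a basis in which $x=x_1+x_2 i$, $y=y_1+y_2 i+y_3 j$, $z=z_1+z_2 i+z_3 j+z_4 k+z_8\ell$, so that $[v]=2x_2y_3z_8\,k\ell$, the $k\ell$-component $b_5$ of $b$ vanishes.)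
   Context: $\mathbb{O}$ denotes the real octonions, constructed by Cayley–Dickson as $\mathbb{H}\oplus\mathbb{H}\ell$ with standard basis $1,i,j,k,k\ell,j\ell,i\ell,\ell$; octonions are written $w=w_1+w_2 i+w_3 j+w_4 k+w_5 k\ell+w_6 j\ell+w_7 i\ell+w_8\ell$. $\operatorname{Re}(w)=w_1$, $\bar w=2\operatorname{Re}(w)-w$, $|w|^2=w\bar w$. The associator is $[x,y,z]=(xy)z-x(yz)$, which is purely imaginary. Orthogonality is with respect to the Euclidean inner product $\langle u,w\rangle=\operatorname{Re}(u\bar w)$ on $\mathbb{O}\cong\mathbb{R}^8$. Any triple of octonions can be brought to the stated "generic" form by a suitable choice of (automorphism-related) basis. *)

theory Defs
  imports Main "HOL.Real"
begin

text \<open>Quaternions as 4-tuples of reals: w1 + w2 i + w3 j + w4 k.\<close>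
datatype quat = Quat real real real real

fun qadd :: "quat \<Rightarrow> quat \<Rightarrow> quat" where
  "qadd (Quat a1 a2 a3 a4) (Quat b1 b2 b3 b4) = Quat (a1+b1) (a2+b2) (a3+b3) (a4+b4)"

fun qneg :: "quat \<Rightarrow> quat" where
  "qneg (Quat a1 a2 a3 a4) = Quat (-a1) (-a2) (-a3) (-a4)"

fun qcnj :: "quat \<Rightarrow> quat" where
  "qcnj (Quat a1 a2 a3 a4) = Quat a1 (-a2) (-a3) (-a4)"

text \<open>Hamilton product (i^2=j^2=k^2=ijk=-1).\<close>
fun qmul :: "quat \<Rightarrow> quat \<Rightarrow> quat" where
  "qmul (Quat a1 a2 a3 a4) (Quat b1 b2 b3 b4) =
     Quat (a1*b1 - a2*b2 - a3*b3 - a4*b4)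
          (a1*b2 + a2*b1 + a3*b4 - a4*b3)
          (a1*b3 - a2*b4 + a3*b1 + a4*b2)
          (a1*b4 + a2*b3 - a3*b2 + a4*b1)"

fun qre :: "quat \<Rightarrow> real" where
  "qre (Quat a1 a2 a3 a4) = a1"

text \<open>Octonions by Cayley--Dickson: O = H + H l, the pair (a,b) stands for a + b l.
  Multiplication (a,b)(c,d) = (ac - conj(d) b, d a + b conj(c)),
  conjugation conj(a,b) = (conj a, -b).\<close>
datatype oct = Oct quat quat

fun oadd :: "oct \<Rightarrow> oct \<Rightarrow> oct" where
  "oadd (Oct a b) (Oct c d) = Oct (qadd a c) (qadd b d)"

fun osub :: "oct \<Rightarrow> oct \<Rightarrow> oct" where
  "osub (Oct a b) (Oct c d) = Oct (qadd a (qneg c)) (qadd b (qneg d))"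

fun omul :: "oct \<Rightarrow> oct \<Rightarrow> oct" where
  "omul (Oct a b) (Oct c d) =
     Oct (qadd (qmul a c) (qneg (qmul (qcnj d) b))) (qadd (qmul d a) (qmul b (qcnj c)))"

fun ocnj :: "oct \<Rightarrow> oct" where
  "ocnj (Oct a b) = Oct (qcnj a) (qneg b)"

fun ore :: "oct \<Rightarrow> real" where
  "ore (Oct a b) = qre a"

definition oreal :: "real \<Rightarrow> oct" where
  "oreal r = Oct (Quat r 0 0 0) (Quat 0 0 0 0)"

definition ozero :: oct where
  "ozero = oreal 0"

definition oassoc :: "oct \<Rightarrow> oct \<Rightarrow> oct \<Rightarrow> oct" where
  "oassoc x y z = osub (omul (omul x y) z) (omul x (omul y z))"

definition oinner :: "oct \<Rightarrow> oct \<Rightarrow> real" where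
  "oinner u w = ore (omul u (ocnj w))"

end

theory Submission
  imports Defs
begin

(* Write v = (x,y,z), w = [x,y,z] and t = Im x.  Take the inner product of
   the i-th row of A v = v w with v_i t and add the three results.
   Right-hand side: <v_i w, v_i t> = |v_i|^2 <w,t> = 0, since the associator is orthogonal
   to 1 and to x, hence to Im x.
   Diagonal terms: <r v_i, v_i t> = r |v_i|^2 Re t = 0 because t is imaginary.
   Off-diagonal terms come in pairs  <a y', x' t> + <conj a x', y' t> = <a, [x',t,conj y']>
   (the "hermitian pair identity").  For the pairs carrying a and c the associator has x and
   Im x in its first two slots and vanishes by alternativity; for the pair carrying b it is
   [y, Im x, conj z] = [x,y,z].  Hence <b,[x,y,z]> = 0. *)

lemma oct_coords:
  obtains x1 x2 x3 x4 x5 x6 x7 x8 where "x = Oct (Quat x1 x2 x3 x4) (Quat x5 x6 x7 x8)"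
  by (metis oct.exhaust quat.exhaust)

definition oim :: "oct \<Rightarrow> oct" where
  "oim x = osub x (oreal (ore x))"

lemma ore_oim: "ore (oim x) = 0"
  by (cases x rule: oct_coords) (simp add: oim_def oreal_def)

lemma oinner_oadd_left: "oinner (oadd u v) w = oinner u w + oinner v w"
proof -
  obtain u1 u2 u3 u4 u5 u6 u7 u8 where u: "u = Oct (Quat u1 u2 u3 u4) (Quat u5 u6 u7 u8)"
    by (rule oct_coords)
  obtain v1 v2 v3 v4 v5 v6 v7 v8 where v: "v = Oct (Quat v1 v2 v3 v4) (Quat v5 v6 v7 v8)"
    by (rule oct_coords)
  obtain w1 w2 w3 w4 w5 w6 w7 w8 where w: "w = Oct (Quat w1 w2 w3 w4) (Quat w5 w6 w7 w8)"
    by (rule oct_coords)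
  show ?thesis unfolding u v w oinner_def by simp algebra
qed

lemma oinner_ozero_right: "oinner u ozero = 0"
  by (cases u rule: oct_coords) (simp add: oinner_def ozero_def oreal_def)

lemma oinner_omul_left: "oinner (omul u v) (omul u s) = oinner u u * oinner v s"
proof -
  obtain u1 u2 u3 u4 u5 u6 u7 u8 where u: "u = Oct (Quat u1 u2 u3 u4) (Quat u5 u6 u7 u8)"
    by (rule oct_coords)
  obtain v1 v2 v3 v4 v5 v6 v7 v8 where v: "v = Oct (Quat v1 v2 v3 v4) (Quat v5 v6 v7 v8)"
    by (rule oct_coords)
  obtain s1 s2 s3 s4 s5 s6 s7 s8 where s: "s = Oct (Quat s1 s2 s3 s4) (Quat s5 s6 s7 s8)"
    by (rule oct_coords)
  show ?thesis unfolding u v s oinner_def by simp algebra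
qed

text \<open>The associator is purely imaginary and orthogonal to its first argument,
  hence orthogonal to the imaginary part of that argument.\<close>
lemma oassoc_orth_oim: "oinner (oassoc x y z) (oim x) = 0"
proof -
  obtain x1 x2 x3 x4 x5 x6 x7 x8 where x: "x = Oct (Quat x1 x2 x3 x4) (Quat x5 x6 x7 x8)"
    by (rule oct_coords)
  obtain y1 y2 y3 y4 y5 y6 y7 y8 where y: "y = Oct (Quat y1 y2 y3 y4) (Quat y5 y6 y7 y8)"
    by (rule oct_coords)
  obtain z1 z2 z3 z4 z5 z6 z7 z8 where z: "z = Oct (Quat z1 z2 z3 z4) (Quat z5 z6 z7 z8)"
    by (rule oct_coords)
  show ?thesis unfolding x y z oinner_def oassoc_def oim_def oreal_def by simp algebra
qed

lemma oinner_oreal_scaled: "oinner (omul (oreal r) y) (omul y u) = r * oinner y y * ore u"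
proof -
  obtain y1 y2 y3 y4 y5 y6 y7 y8 where y: "y = Oct (Quat y1 y2 y3 y4) (Quat y5 y6 y7 y8)"
    by (rule oct_coords)
  obtain u1 u2 u3 u4 u5 u6 u7 u8 where u: "u = Oct (Quat u1 u2 u3 u4) (Quat u5 u6 u7 u8)"
    by (rule oct_coords)
  show ?thesis unfolding y u oinner_def oreal_def by simp algebra
qed

lemma oinner_hermitian_pair:
  assumes "ore t = 0"
  shows "oinner (omul a y) (omul x t) + oinner (omul (ocnj a) x) (omul y t)
           = oinner a (oassoc x t (ocnj y))"
proof -
  obtain x1 x2 x3 x4 x5 x6 x7 x8 where x: "x = Oct (Quat x1 x2 x3 x4) (Quat x5 x6 x7 x8)"
    by (rule oct_coords)
  obtain y1 y2 y3 y4 y5 y6 y7 y8 where y: "y = Oct (Quat y1 y2 y3 y4) (Quat y5 y6 y7 y8)"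
    by (rule oct_coords)
  obtain a1 a2 a3 a4 a5 a6 a7 a8 where a: "a = Oct (Quat a1 a2 a3 a4) (Quat a5 a6 a7 a8)"
    by (rule oct_coords)
  obtain t2 t3 t4 t5 t6 t7 t8 where t: "t = Oct (Quat 0 t2 t3 t4) (Quat t5 t6 t7 t8)"
    using assms by (cases t rule: oct_coords) simp
  show ?thesis unfolding x y a t oinner_def oassoc_def by simp algebra
qed

text \<open>Alternativity: the associator vanishes when its first two slots are x and Im x.\<close>
lemma oassoc_oim_self: "oassoc x (oim x) w = ozero"
proof -
  obtain x1 x2 x3 x4 x5 x6 x7 x8 where x: "x = Oct (Quat x1 x2 x3 x4) (Quat x5 x6 x7 x8)"
    by (rule oct_coords)
  obtain w1 w2 w3 w4 w5 w6 w7 w8 where w: "w = Oct (Quat w1 w2 w3 w4) (Quat w5 w6 w7 w8)"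
    by (rule oct_coords)
  show ?thesis unfolding x w oassoc_def oim_def oreal_def ozero_def by simp algebra
qed

text \<open>The associator is alternating and changes sign under conjugating one argument,
  so [y, Im x, conj z] = [x, y, z].\<close>
lemma oassoc_swap_conj: "oassoc y (oim x) (ocnj z) = oassoc x y z"
proof -
  obtain x1 x2 x3 x4 x5 x6 x7 x8 where x: "x = Oct (Quat x1 x2 x3 x4) (Quat x5 x6 x7 x8)"
    by (rule oct_coords)
  obtain y1 y2 y3 y4 y5 y6 y7 y8 where y: "y = Oct (Quat y1 y2 y3 y4) (Quat y5 y6 y7 y8)"
    by (rule oct_coords)
  obtain z1 z2 z3 z4 z5 z6 z7 z8 where z: "z = Oct (Quat z1 z2 z3 z4) (Quat z5 z6 z7 z8)"
    by (rule oct_coords)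
  show ?thesis unfolding x y z oassoc_def oim_def oreal_def by simp algebra
qed

lemma ocnj_ocnj: "ocnj (ocnj c) = c"
  by (cases c rule: oct_coords) simp

theorem lemma2:
  fixes x y z a b c :: oct and p m n :: real
  assumes nz: "oassoc x y z \<noteq> ozero"
    and e1: "oadd (oadd (omul (oreal p) x) (omul a y)) (omul (ocnj c) z) = omul x (oassoc x y z)"
    and e2: "oadd (oadd (omul (ocnj a) x) (omul (oreal m) y)) (omul b z) = omul y (oassoc x y z)"
    and e3: "oadd (oadd (omul c x) (omul (ocnj b) y)) (omul (oreal n) z) = omul z (oassoc x y z)"
  shows "oinner b (oassoc x y z) = 0"
proof -
  let ?t = "oim x"
  note pair = oinner_hermitian_pair[OF ore_oim[of x]]
  note simps = oinner_oadd_left oinner_omul_left oassoc_orth_oim oinner_oreal_scaled ore_oim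
  have row1: "oinner (omul a y) (omul x ?t) + oinner (omul (ocnj c) z) (omul x ?t) = 0"
    using arg_cong[OF e1, of "\<lambda>u. oinner u (omul x ?t)"] by (simp add: simps)
  have row2: "oinner (omul (ocnj a) x) (omul y ?t) + oinner (omul b z) (omul y ?t) = 0"
    using arg_cong[OF e2, of "\<lambda>u. oinner u (omul y ?t)"] by (simp add: simps)
  have row3: "oinner (omul c x) (omul z ?t) + oinner (omul (ocnj b) y) (omul z ?t) = 0"
    using arg_cong[OF e3, of "\<lambda>u. oinner u (omul z ?t)"] by (simp add: simps)
  have a_pair: "oinner (omul a y) (omul x ?t) + oinner (omul (ocnj a) x) (omul y ?t) = 0"
    using pair[of a y x] by (simp add: oassoc_oim_self oinner_ozero_right)
  have c_pair: "oinner (omul (ocnj c) z) (omul x ?t) + oinner (omul c x) (omul z ?t) = 0"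
    using pair[of "ocnj c" z x] by (simp add: ocnj_ocnj oassoc_oim_self oinner_ozero_right)
  have b_pair: "oinner (omul b z) (omul y ?t) + oinner (omul (ocnj b) y) (omul z ?t)
                  = oinner b (oassoc x y z)"
    using pair[of b z y] by (simp add: oassoc_swap_conj)
  show ?thesis using row1 row2 row3 a_pair c_pair b_pair by linarith
qed

end
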